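(* Let $A\in\{0,1\}^{N\times n}$ and suppose there are $j\in[N]$ and $i_1\ne i_2\in[n]$ with $A_{ji_1}=A_{ji_2}=1$. Let $U_1,\dots,U_N,V_1,\dots,V_n\in\mathbb{R}^d$ be a margin-$m$, relative-bias-$\tau$ embedding of $A$ (for some $m\ge0$, $\tau\in\mathbb{R}$) with $\langle U_j,V_{i_1}\rangle\ne\langle U_j,V_{i_2}\rangle$. Define, for $t>0$, $$\mathcal{L}_{\mathrm{InfoNCE}}(\{U_j\},\{V_i\};t)=-\sum_{(j',i)\in[N]\times[n]:\,A_{j'i}=1}\log\frac{\exp(t\langle U_{j'},V_i\rangle)}{\sum_{\ell=1}^n\exp(t\langle U_{j'},V_\ell\rangle)}.$$ Then $\lim_{T\to+\infty}\mathcal{L}_{\mathrm{InfoNCE}}(\{U_j\},\{V_i\};T)=+\infty$.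
   Context: For $A\in\{0,1\}^{N\times n}$, $m\ge0$ and $\tau\in\mathbb{R}$, unit vectors $U_1,\dots,U_N,V_1,\dots,V_n\in\mathbb{R}^d$ form a margin-$m$, relative-bias-$\tau$ embedding of $A$ if $\langle U_j,V_i\rangle\ge\tau+m$ whenever $A_{ji}=1$ and $\langle U_j,V_i\rangle\le\tau-m$ whenever $A_{ji}=0$. *)

theory Defs
  imports "HOL-Analysis.Analysis"
begin

text \<open>The 0/1 matrix A is a function
  nat => nat => nat whose entries on [N] x [n] lie in {0,1}. Vectors live in an arbitrary
  Euclidean space 'a (playing the role of R^d).\<close>

definition margin_embedding ::
  "nat \<Rightarrow> nat \<Rightarrow> (nat \<Rightarrow> nat \<Rightarrow> nat) \<Rightarrow> real \<Rightarrow> real \<Rightarrow>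
   (nat \<Rightarrow> 'a::euclidean_space) \<Rightarrow> (nat \<Rightarrow> 'a) \<Rightarrow> bool" where
  "margin_embedding N n A m \<tau> U V \<longleftrightarrow>
     (\<forall>j<N. norm (U j) = 1) \<and> (\<forall>i<n. norm (V i) = 1) \<and>
     (\<forall>j<N. \<forall>i<n. A j i = 1 \<longrightarrow> inner (U j) (V i) \<ge> \<tau> + m) \<and>
     (\<forall>j<N. \<forall>i<n. A j i = 0 \<longrightarrow> inner (U j) (V i) \<le> \<tau> - m)"

definition infoNCE_loss ::
  "nat \<Rightarrow> nat \<Rightarrow> (nat \<Rightarrow> nat \<Rightarrow> nat) \<Rightarrow> (nat \<Rightarrow> 'a::euclidean_space) \<Rightarrow> (nat \<Rightarrow> 'a) \<Rightarrow> real \<Rightarrow> real" where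
  "infoNCE_loss N n A U V t =
     - (\<Sum>(j', i) \<in> {(j', i). j' < N \<and> i < n \<and> A j' i = 1}.
          ln (exp (t * inner (U j') (V i)) / (\<Sum>l<n. exp (t * inner (U j') (V l)))))"

end

theory Submission
  imports Defs
begin

text \<open>Every summand of the loss is a cross-entropy term \<open>-ln softmax\<close>, hence nonnegative, and
  \<open>-ln softmax_i(x) \<ge> x\<^sub>k - x\<^sub>i\<close> for every competitor \<open>k\<close>. For the row \<open>j\<close> the two positive
  pairs \<open>(j, i\<^sub>1)\<close> and \<open>(j, i\<^sub>2)\<close> therefore contribute at least
  \<open>T \<bar>\<langle>U\<^sub>j, V\<^sub>i\<^sub>1\<rangle> - \<langle>U\<^sub>j, V\<^sub>i\<^sub>2\<rangle>\<bar>\<close>, which tends to infinity.\<close>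

lemma neg_ln_softmax_ge_diff:
  fixes x :: "'i \<Rightarrow> real"
  assumes "finite I" "i \<in> I" "k \<in> I"
  shows "- ln (exp (x i) / (\<Sum>l\<in>I. exp (x l))) \<ge> x k - x i"
proof -
  have pos: "(\<Sum>l\<in>I. exp (x l)) > 0"
    using assms by (intro sum_pos2[where i = i]) auto
  have "exp (x k) \<le> (\<Sum>l\<in>I. exp (x l))"
    using assms by (intro member_le_sum) auto
  then have "x k \<le> ln (\<Sum>l\<in>I. exp (x l))"
    using pos by (metis ln_exp ln_le_cancel_iff exp_gt_zero)
  moreover have "- ln (exp (x i) / (\<Sum>l\<in>I. exp (x l))) = ln (\<Sum>l\<in>I. exp (x l)) - x i"
    using pos by (simp add: ln_div)
  ultimately show ?thesis by simp
qed

lemma neg_ln_softmax_nonneg: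
  fixes x :: "'i \<Rightarrow> real"
  assumes "finite I" "i \<in> I"
  shows "- ln (exp (x i) / (\<Sum>l\<in>I. exp (x l))) \<ge> 0"
  using neg_ln_softmax_ge_diff[OF assms assms(2), of x] by simp

lemma neg_ln_softmax_pair_ge_abs_diff:
  fixes x :: "'i \<Rightarrow> real"
  assumes "finite I" "i1 \<in> I" "i2 \<in> I"
  shows "- ln (exp (x i1) / (\<Sum>l\<in>I. exp (x l))) - ln (exp (x i2) / (\<Sum>l\<in>I. exp (x l)))
           \<ge> \<bar>x i1 - x i2\<bar>"
  using neg_ln_softmax_ge_diff[OF assms(1,2,3), of x] neg_ln_softmax_ge_diff[OF assms(1,3,2), of x]
    neg_ln_softmax_nonneg[OF assms(1,2), of x] neg_ln_softmax_nonneg[OF assms(1,3), of x]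
  by linarith

lemma infoNCE_loss_ge_score_gap:
  assumes "j < N" "i1 < n" "i2 < n" "i1 \<noteq> i2" "A j i1 = 1" "A j i2 = 1" "t \<ge> 0"
  shows "infoNCE_loss N n A U V t \<ge> t * \<bar>inner (U j) (V i1) - inner (U j) (V i2)\<bar>"
proof -
  define S where "S = {(j', i). j' < N \<and> i < n \<and> A j' i = 1}"
  define g where "g = (\<lambda>(j', i). - ln (exp (t * inner (U j') (V i)) /
                                      (\<Sum>l<n. exp (t * inner (U j') (V l)))))"
  have "finite S"
    unfolding S_def by (rule finite_subset[of _ "{..<N} \<times> {..<n}"]) auto
  moreover have "\<forall>p\<in>S. g p \<ge> 0"
    unfolding S_def g_def using neg_ln_softmax_nonneg[of "{..<n}"] by auto
  moreover have "{(j, i1), (j, i2)} \<subseteq> S"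
    unfolding S_def using assms by auto
  ultimately have "g (j, i1) + g (j, i2) \<le> sum g S"
    using sum_mono2[of S "{(j, i1), (j, i2)}" g] assms(4) by simp
  moreover have "g (j, i1) + g (j, i2) \<ge> \<bar>t * inner (U j) (V i1) - t * inner (U j) (V i2)\<bar>"
    unfolding g_def
    using neg_ln_softmax_pair_ge_abs_diff[of "{..<n}" i1 i2 "\<lambda>l. t * inner (U j) (V l)"] assms
    by simp
  moreover have "infoNCE_loss N n A U V t = sum g S"
    unfolding infoNCE_loss_def S_def g_def by (simp add: sum_negf case_prod_unfold)
  ultimately show ?thesis
    using assms(7) by (simp add: abs_mult flip: right_diff_distrib)
qed

theorem propositionH1:
  fixes N n :: nat and A :: "nat \<Rightarrow> nat \<Rightarrow> nat"
    and U V :: "nat \<Rightarrow> 'a::euclidean_space" and m \<tau> :: real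
    and j i1 i2 :: nat
  assumes A01: "\<forall>j'<N. \<forall>i<n. A j' i \<in> {0, 1}"
    and j: "j < N" and i1: "i1 < n" and i2: "i2 < n" and ne: "i1 \<noteq> i2"
    and A1: "A j i1 = 1" and A2: "A j i2 = 1"
    and m: "m \<ge> 0"
    and emb: "margin_embedding N n A m \<tau> U V"
    and dist: "inner (U j) (V i1) \<noteq> inner (U j) (V i2)"
  shows "filterlim (\<lambda>T. infoNCE_loss N n A U V T) at_top at_top"
proof -
  define c where "c = \<bar>inner (U j) (V i1) - inner (U j) (V i2)\<bar>"
  have "c > 0"
    using dist unfolding c_def by simp
  then have "filterlim (\<lambda>T. T * c) at_top at_top"
    by (intro filterlim_at_top_mult_tendsto_pos[OF tendsto_const] filterlim_ident)
  moreover have "\<forall>\<^sub>F T in at_top. T * c \<le> infoNCE_loss N n A U V T"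
    using eventually_ge_at_top[of "0::real"]
    by eventually_elim (use infoNCE_loss_ge_score_gap[where A = A and U = U and V = V, OF j i1 i2 ne A1 A2] c_def in auto)
  ultimately show ?thesis
    by (rule filterlim_at_top_mono)
qed

end
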